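(* Let $R$ be the bracket algebra on six points, i.e. the subring of $\mathbb{C}[u_{ij}: 0\le i\le 3, 0\le j\le 5]$ generated by the $4\times4$ minors $[abcd]$ (columns $a,b,c,d$) of a generic $4\times 6$ matrix with columns labelled $0,\dots,5$. The symmetric group $\mathbb{S}_6$ acts on $R$ by permuting column labels, $\sigma([abcd])=[\sigma(a)\sigma(b)\sigma(c)\sigma(d)]$. Let $B=[0125][0234][1345]-[0124][2345][0135]$. Then the product $[0123][0145][2345]$ lies in the ideal of $R$ generated by $\{\sigma(B):\sigma\in\mathbb{S}_6\}$. In particular, if $0,\dots,5$ are points of $\mathbb{P}^3(\mathbb{C})$ with representative vectors such that the lines $01$, $23$, $45$ are mutually skew, then there is a permutation $\sigma$ of $\{0,\dots,5\}$ with $\sigma(B)\ne 0$ when evaluated at these vectors.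
   Context: $[abcd]$ denotes the determinant of the $4\times4$ matrix with columns the vectors labelled $a,b,c,d$. Lines $ab$ and $cd$ in $\mathbb{P}^3$ meet if and only if $[abcd]=0$. *)

theory Defs
  imports "Jordan_Normal_Form.Determinant" "HOL-Combinatorics.Permutations"
begin

text \<open>A configuration U assigns to each column label j (0..5) a vector in C^4,
  with coordinates U j i (i = 0..3). Entries outside these ranges are ignored.
  U j i plays the role of the indeterminate u_{ij}.\<close>

type_synonym config = "nat \<Rightarrow> nat \<Rightarrow> complex"

definition brk :: "config \<Rightarrow> nat \<Rightarrow> nat \<Rightarrow> nat \<Rightarrow> nat \<Rightarrow> complex" where
  "brk U a b c d = det (mat 4 4 (\<lambda>(i,j). U ([a,b,c,d] ! j) i))"

text \<open>The bracket algebra on six points, as a C-algebra of polynomial functions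
  in the entries of a 4x6 matrix (polynomials over C are determined by their
  functions, C being infinite): generated by the brackets.\<close>

inductive_set bracket_alg :: "(config \<Rightarrow> complex) set" where
  const: "(\<lambda>U. c) \<in> bracket_alg"
| bracket: "a < 6 \<Longrightarrow> b < 6 \<Longrightarrow> c < 6 \<Longrightarrow> d < 6 \<Longrightarrow> (\<lambda>U. brk U a b c d) \<in> bracket_alg"
| add: "f \<in> bracket_alg \<Longrightarrow> g \<in> bracket_alg \<Longrightarrow> (\<lambda>U. f U + g U) \<in> bracket_alg"
| mult: "f \<in> bracket_alg \<Longrightarrow> g \<in> bracket_alg \<Longrightarrow> (\<lambda>U. f U * g U) \<in> bracket_alg"

definition Bperm :: "(nat \<Rightarrow> nat) \<Rightarrow> config \<Rightarrow> complex" where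
  "Bperm \<sigma> U =
     brk U (\<sigma> 0) (\<sigma> 1) (\<sigma> 2) (\<sigma> 5) * brk U (\<sigma> 0) (\<sigma> 2) (\<sigma> 3) (\<sigma> 4)
       * brk U (\<sigma> 1) (\<sigma> 3) (\<sigma> 4) (\<sigma> 5)
   - brk U (\<sigma> 0) (\<sigma> 1) (\<sigma> 2) (\<sigma> 4) * brk U (\<sigma> 2) (\<sigma> 3) (\<sigma> 4) (\<sigma> 5)
       * brk U (\<sigma> 0) (\<sigma> 1) (\<sigma> 3) (\<sigma> 5)"

definition in_B_ideal :: "(config \<Rightarrow> complex) \<Rightarrow> bool" where
  "in_B_ideal f \<longleftrightarrow> (\<exists>r :: (nat \<Rightarrow> nat) \<Rightarrow> config \<Rightarrow> complex.
      (\<forall>\<sigma>. \<sigma> permutes {..<6} \<longrightarrow> r \<sigma> \<in> bracket_alg) \<and>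
      f = (\<lambda>U. \<Sum>\<sigma>\<in>{\<sigma>. \<sigma> permutes {..<6}}. r \<sigma> U * Bperm \<sigma> U))"

end

theory Submission
  imports Defs
begin

text \<open>A signed sum of \<open>\<sigma>(B)\<close> over six permutations \<open>\<sigma>\<close> fixing 0 and 1 equals
  3 [0123][0145][2345] - [0123]([0145][2345] - [0245][1345] + [0345][1245]), and the
  second factor of the correction term is a three-term Grassmann-Pluecker relation,
  hence zero. So the product is a constant linear combination of the \<open>\<sigma>(B)\<close>, and
  wherever it is non-zero some \<open>\<sigma>(B)\<close> is non-zero. The Grassmann-Pluecker relation
  holds because, for fixed x and y, (p, q) \<mapsto> [pqxy] is the pairing with the
  bivector x \<and> y, whose square vanishes.\<close>

lemma det_mat_Suc:
  fixes f :: "nat \<times> nat \<Rightarrow> 'a :: comm_ring_1"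
  shows "det (mat (Suc n) (Suc n) f) =
    (\<Sum>j<Suc n. (-1) ^ j * f (0, j) *
       det (mat n n (\<lambda>(i, k). f (Suc i, if k < j then k else Suc k))))"
proof -
  have minor: "mat_delete (mat (Suc n) (Suc n) f) 0 j =
      mat n n (\<lambda>(i, k). f (Suc i, if k < j then k else Suc k))" for j
    by (rule eq_matI) (auto simp: mat_delete_def)
  show ?thesis
    by (subst laplace_expansion_row[of _ "Suc n" 0])
       (auto simp: cofactor_def minor mult.left_commute intro!: sum.cong)
qed

lemma det_mat_4:
  fixes f :: "nat \<times> nat \<Rightarrow> 'a :: comm_ring_1"
  shows "det (mat 4 4 f) =
      f (0,0) * (f (1,1) * (f (2,2) * f (3,3) - f (2,3) * f (3,2))
        - f (1,2) * (f (2,1) * f (3,3) - f (2,3) * f (3,1))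
        + f (1,3) * (f (2,1) * f (3,2) - f (2,2) * f (3,1)))
    - f (0,1) * (f (1,0) * (f (2,2) * f (3,3) - f (2,3) * f (3,2))
        - f (1,2) * (f (2,0) * f (3,3) - f (2,3) * f (3,0))
        + f (1,3) * (f (2,0) * f (3,2) - f (2,2) * f (3,0)))
    + f (0,2) * (f (1,0) * (f (2,1) * f (3,3) - f (2,3) * f (3,1))
        - f (1,1) * (f (2,0) * f (3,3) - f (2,3) * f (3,0))
        + f (1,3) * (f (2,0) * f (3,1) - f (2,1) * f (3,0)))
    - f (0,3) * (f (1,0) * (f (2,1) * f (3,2) - f (2,2) * f (3,1))
        - f (1,1) * (f (2,0) * f (3,2) - f (2,2) * f (3,0))
        + f (1,2) * (f (2,0) * f (3,1) - f (2,1) * f (3,0)))"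
  by (simp add: numeral_eq_Suc det_mat_Suc lessThan_Suc algebra_simps)

text \<open>A bivector v in \<open>\<Lambda>\<^sup>2 \<complex>\<^sup>4\<close> is given by its coordinates v i j for i < j;
  minor2 U a b are the coordinates of the bivector of columns a and b, and wedge2 v w is
  the coefficient of \<open>e\<^sub>0 \<and> e\<^sub>1 \<and> e\<^sub>2 \<and> e\<^sub>3\<close> in v \<and> w.\<close>

definition minor2 :: "config \<Rightarrow> nat \<Rightarrow> nat \<Rightarrow> nat \<Rightarrow> nat \<Rightarrow> complex" where
  "minor2 U a b i j = U a i * U b j - U a j * U b i"

definition wedge2 :: "(nat \<Rightarrow> nat \<Rightarrow> complex) \<Rightarrow> (nat \<Rightarrow> nat \<Rightarrow> complex) \<Rightarrow> complex" where
  "wedge2 v w = v 0 1 * w 2 3 - v 0 2 * w 1 3 + v 0 3 * w 1 2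
     + v 1 2 * w 0 3 - v 1 3 * w 0 2 + v 2 3 * w 0 1"

lemma brk_eq_wedge2_minor2: "brk U a b c d = wedge2 (minor2 U a b) (minor2 U c d)"
  unfolding brk_def det_mat_4 wedge2_def minor2_def by (simp add: algebra_simps)

lemma wedge2_commute: "wedge2 v w = wedge2 w v"
  unfolding wedge2_def by (simp add: algebra_simps)

lemma brk_repeated_pair: "brk U a b a b = 0"
  unfolding brk_eq_wedge2_minor2 wedge2_def minor2_def by (simp add: algebra_simps)

lemma wedge2_square_identity:
  "2 * (wedge2 v (minor2 U a b) * wedge2 v (minor2 U c d)
      - wedge2 v (minor2 U a c) * wedge2 v (minor2 U b d)
      + wedge2 v (minor2 U a d) * wedge2 v (minor2 U b c))
   = wedge2 v v * brk U a b c d"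
  unfolding brk_eq_wedge2_minor2 wedge2_def minor2_def by (simp add: algebra_simps)

lemma grassmann_pluecker:
  "brk U a b x y * brk U c d x y - brk U a c x y * brk U b d x y
     + brk U a d x y * brk U b c x y = 0"
proof -
  let ?v = "minor2 U x y"
  have as_wedge2: "brk U p q x y = wedge2 ?v (minor2 U p q)" for p q
    by (simp add: brk_eq_wedge2_minor2 wedge2_commute)
  have "2 * (brk U a b x y * brk U c d x y - brk U a c x y * brk U b d x y
      + brk U a d x y * brk U b c x y) = wedge2 ?v ?v * brk U a b c d"
    unfolding as_wedge2 by (rule wedge2_square_identity)
  also have "\<dots> = 0"
    using brk_repeated_pair[of U x y] by (simp add: brk_eq_wedge2_minor2)
  finally show ?thesis
    by (metis mult_eq_0_iff zero_neq_numeral)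
qed

text \<open>Stated conditionally so that, as simp rules, they sort the columns of concrete
  brackets into increasing order and then stop.\<close>

lemma brk_sort_columns:
  "b < a \<Longrightarrow> brk U a b c d = - brk U b a c d"
  "c < b \<Longrightarrow> brk U a b c d = - brk U a c b d"
  "d < c \<Longrightarrow> brk U a b c d = - brk U a b d c"
  unfolding brk_eq_wedge2_minor2 wedge2_def minor2_def by (simp_all add: algebra_simps)

lemma three_times_product_eq_Bperm_combination:
  "3 * (brk U 0 1 2 3 * brk U 0 1 4 5 * brk U 2 3 4 5) =
     Bperm (transpose 3 4) U + Bperm (transpose 3 4 \<circ> transpose 4 5) U
   + Bperm (transpose 2 3 \<circ> transpose 3 4 \<circ> transpose 4 5) U - Bperm id U
   - Bperm (transpose 4 5) U + Bperm (transpose 4 5 \<circ> transpose 3 4) U"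
proof -
  have "Bperm (transpose 3 4) U + Bperm (transpose 3 4 \<circ> transpose 4 5) U
      + Bperm (transpose 2 3 \<circ> transpose 3 4 \<circ> transpose 4 5) U - Bperm id U
      - Bperm (transpose 4 5) U + Bperm (transpose 4 5 \<circ> transpose 3 4) U
    = 3 * (brk U 0 1 2 3 * brk U 0 1 4 5 * brk U 2 3 4 5)
      - brk U 0 1 2 3 * (brk U 0 1 4 5 * brk U 2 3 4 5 - brk U 0 2 4 5 * brk U 1 3 4 5
                          + brk U 0 3 4 5 * brk U 1 2 4 5)"
    by (simp add: Bperm_def transpose_def brk_sort_columns algebra_simps)
  then show ?thesis
    using grassmann_pluecker[where a = 0 and b = 1 and c = 2 and d = 3 and x = 4 and y = 5]
    by simp
qed

lemma in_B_ideal_Bperm: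
  assumes "\<sigma> permutes {..<6}"
  shows "in_B_ideal (Bperm \<sigma>)"
  unfolding in_B_ideal_def
proof (intro exI conjI allI impI)
  show "(\<lambda>U. of_bool (\<tau> = \<sigma>)) \<in> bracket_alg" for \<tau>
    by (rule bracket_alg.const)
  show "Bperm \<sigma> = (\<lambda>U. \<Sum>\<tau>\<in>{\<tau>. \<tau> permutes {..<6}}. of_bool (\<tau> = \<sigma>) * Bperm \<tau> U)"
  proof -
    have "{\<tau>. \<tau> permutes {..<6}} \<inter> {\<tau>. \<tau> = \<sigma>} = {\<sigma>}"
      using assms by auto
    then show ?thesis
      by (simp add: finite_permutations)
  qed
qed

lemma in_B_ideal_add:
  assumes "in_B_ideal f" and "in_B_ideal g"
  shows "in_B_ideal (\<lambda>U. f U + g U)"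
proof -
  obtain r s where
    "\<forall>\<sigma>. \<sigma> permutes {..<6} \<longrightarrow> r \<sigma> \<in> bracket_alg"
    "f = (\<lambda>U. \<Sum>\<sigma>\<in>{\<sigma>. \<sigma> permutes {..<6}}. r \<sigma> U * Bperm \<sigma> U)"
    "\<forall>\<sigma>. \<sigma> permutes {..<6} \<longrightarrow> s \<sigma> \<in> bracket_alg"
    "g = (\<lambda>U. \<Sum>\<sigma>\<in>{\<sigma>. \<sigma> permutes {..<6}}. s \<sigma> U * Bperm \<sigma> U)"
    using assms unfolding in_B_ideal_def by blast
  then show ?thesis
    unfolding in_B_ideal_def
    by (intro exI[of _ "\<lambda>\<sigma> U. r \<sigma> U + s \<sigma> U"])
       (auto intro: bracket_alg.add simp: distrib_right sum.distrib)
qed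

lemma in_B_ideal_mult:
  assumes "g \<in> bracket_alg" and "in_B_ideal f"
  shows "in_B_ideal (\<lambda>U. g U * f U)"
proof -
  obtain r where
    "\<forall>\<sigma>. \<sigma> permutes {..<6} \<longrightarrow> r \<sigma> \<in> bracket_alg"
    "f = (\<lambda>U. \<Sum>\<sigma>\<in>{\<sigma>. \<sigma> permutes {..<6}}. r \<sigma> U * Bperm \<sigma> U)"
    using assms(2) unfolding in_B_ideal_def by blast
  with assms(1) show ?thesis
    unfolding in_B_ideal_def
    by (intro exI[of _ "\<lambda>\<sigma> U. g U * r \<sigma> U"])
       (auto intro: bracket_alg.mult simp: sum_distrib_left mult.assoc)
qed

lemma in_B_ideal_diff:
  assumes "in_B_ideal f" and "in_B_ideal g"
  shows "in_B_ideal (\<lambda>U. f U - g U)"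
proof -
  have "in_B_ideal (\<lambda>U. f U + (- 1) * g U)"
    by (intro in_B_ideal_add in_B_ideal_mult bracket_alg.const assms)
  then show ?thesis
    by simp
qed

lemma Bperm_nonzero_if_in_B_ideal:
  assumes "in_B_ideal f" and "f U \<noteq> 0"
  shows "\<exists>\<sigma>. \<sigma> permutes {..<6} \<and> Bperm \<sigma> U \<noteq> 0"
proof (rule ccontr)
  assume "\<not> ?thesis"
  moreover obtain r where "f = (\<lambda>U. \<Sum>\<sigma>\<in>{\<sigma>. \<sigma> permutes {..<6}}. r \<sigma> U * Bperm \<sigma> U)"
    using assms(1) unfolding in_B_ideal_def by blast
  ultimately have "f U = 0"
    by (auto intro: sum.neutral)
  with assms(2) show False ..
qed

theorem mainTheorem5:
  shows "in_B_ideal (\<lambda>U. brk U 0 1 2 3 * brk U 0 1 4 5 * brk U 2 3 4 5)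
    \<and> (\<forall>U. brk U 0 1 2 3 \<noteq> 0 \<and> brk U 0 1 4 5 \<noteq> 0 \<and> brk U 2 3 4 5 \<noteq> 0
          \<longrightarrow> (\<exists>\<sigma>. \<sigma> permutes {..<6} \<and> Bperm \<sigma> U \<noteq> 0))"
proof -
  have product_eq: "(\<lambda>U. brk U 0 1 2 3 * brk U 0 1 4 5 * brk U 2 3 4 5) = (\<lambda>U. 1 / 3 *
     (Bperm (transpose 3 4) U + Bperm (transpose 3 4 \<circ> transpose 4 5) U
    + Bperm (transpose 2 3 \<circ> transpose 3 4 \<circ> transpose 4 5) U - Bperm id U
    - Bperm (transpose 4 5) U + Bperm (transpose 4 5 \<circ> transpose 3 4) U))"
    unfolding three_times_product_eq_Bperm_combination[symmetric] by simp
  have ideal: "in_B_ideal (\<lambda>U. brk U 0 1 2 3 * brk U 0 1 4 5 * brk U 2 3 4 5)"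
    unfolding product_eq
    by (intro in_B_ideal_mult bracket_alg.const in_B_ideal_add in_B_ideal_diff
        in_B_ideal_Bperm permutes_compose permutes_swap_id permutes_id) simp_all
  then show ?thesis
    using Bperm_nonzero_if_in_B_ideal[OF ideal] by auto
qed

end
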